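(* On the two coordinate axes consider the inner product $$\langle f,g\rangle=\int_{\mathbb R}f(x,0)g(x,0)e^{-x^2}dx+\int_{\mathbb R}f(0,y)g(0,y)e^{-y^2}dy .$$ Define $$Y_{n,1}(x,y)=H_n(x)+H_n(y)-H_n(0)\ (n\ge0),$$ $$Y_{2n,2}(x,y)=x^2L_{n-1}^{\frac32}(x^2)-y^2L_{n-1}^{\frac32}(y^2)\ (n\ge1),\qquad Y_{2n+1,2}(x,y)=x\,L_n^{\frac12}(x^2)-y\,L_n^{\frac12}(y^2)\ (n\ge0).$$ Then for every $m\ge1$, $Y_{m,1}$ and $Y_{m,2}$ are polynomials of degree $m$ which are orthogonal (with respect to $\langle\cdot,\cdot\rangle$) to all polynomials of degree less than $m$ and to each other; that is, they are mutually orthogonal elements of $\mathcal H_m$.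
   Context: $H_n$ denotes the Hermite polynomial of degree $n$ (orthogonal with respect to $e^{-x^2}$ on $\mathbb R$), and $L_n^{\alpha}$ the Laguerre polynomial of degree $n$ (orthogonal with respect to $t^{\alpha}e^{-t}$ on $[0,\infty)$). $\mathcal H_m$ is the space of polynomials of degree $m$ in two variables orthogonal to all polynomials of lower degree, modulo the ideal $\langle xy\rangle$. *)

theory Defs
  imports "HOL-Analysis.Analysis"
begin

fun hermite :: "nat \<Rightarrow> real \<Rightarrow> real" where
  "hermite 0 x = 1"
| "hermite (Suc 0) x = 2 * x"
| "hermite (Suc (Suc n)) x = 2 * x * hermite (Suc n) x - 2 * real (Suc n) * hermite n x"

definition laguerre :: "nat \<Rightarrow> real \<Rightarrow> real \<Rightarrow> real" where
  "laguerre n a t = (\<Sum>k\<le>n. (-1)^k * ((real n + a) gchoose (n - k)) * t^k / fact k)"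

definition axes_ip :: "(real \<Rightarrow> real \<Rightarrow> real) \<Rightarrow> (real \<Rightarrow> real \<Rightarrow> real) \<Rightarrow> real" where
  "axes_ip f g = (LINT x|lborel. f x 0 * g x 0 * exp (- (x^2)))
               + (LINT y|lborel. f 0 y * g 0 y * exp (- (y^2)))"

definition Y1 :: "nat \<Rightarrow> real \<Rightarrow> real \<Rightarrow> real" where
  "Y1 n x y = hermite n x + hermite n y - hermite n 0"

definition Y2 :: "nat \<Rightarrow> real \<Rightarrow> real \<Rightarrow> real" where
  "Y2 m x y = (if even m
     then x^2 * laguerre (m div 2 - 1) (3/2) (x^2) - y^2 * laguerre (m div 2 - 1) (3/2) (y^2)
     else x * laguerre (m div 2) (1/2) (x^2) - y * laguerre (m div 2) (1/2) (y^2))"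

definition bipoly_of_degree :: "nat \<Rightarrow> (real \<Rightarrow> real \<Rightarrow> real) \<Rightarrow> bool" where
  "bipoly_of_degree m f \<longleftrightarrow> (\<exists>c :: nat \<Rightarrow> nat \<Rightarrow> real.
      (\<forall>x y. f x y = (\<Sum>(i,j)\<in>{(i,j). i + j \<le> m}. c i j * x^i * y^j))
      \<and> (\<exists>i j. i + j = m \<and> c i j \<noteq> 0))"

end

theory Submission
  imports Defs "HOL-Probability.Distributions" "HOL-Computational_Algebra.Polynomial"
begin

text \<open>Restricted to an axis, the inner product is the integral of a univariate polynomial against
  \<open>w = e^(-x^2)\<close>, a linear functional determined by the moments \<open>M_n = \<integral> x^n w\<close>. The recursion
  \<open>M_(n+2) = (n+1)/2 M_n\<close> says \<open>\<integral> p' w = 2 \<integral> x p w\<close>; together with \<open>H_(n+1) = 2x H_n - H_n'\<close>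
  this gives \<open>\<integral> H_n q w = \<integral> q^(n) w\<close>, hence the Hermite orthogonality. For the Laguerre profiles,
  \<open>\<integral> x^(2b) L_N^(b-1/2)(x^2) x^(2s) w\<close> is a multiple of \<open>\<Sum>k (-1)^k C(N,k) (k+b+1/2)_s\<close>, an
  \<open>N\<close>-th finite difference of a polynomial of degree \<open>s < N\<close>, hence zero; odd integrands vanish
  by symmetry.
  A test polynomial of degree \<open>< m\<close> restricts to the two axes as polynomials sharing only the
  constant term \<open>c_00\<close>. Both \<open>Y_(m,1)\<close> and \<open>Y_(m,2)\<close> annihilate the non-constant monomials on each
  axis, and their pairings with the constant cancel between the axes: for \<open>Y_(m,1)\<close> because
  \<open>\<integral> H_m w = 0\<close>, for \<open>Y_(m,2)\<close> because its two axis profiles are opposite. The latter also makes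
  \<open>\<langle>Y_(m,1), Y_(m,2)\<rangle>\<close> vanish, as \<open>Y_(m,1)\<close> has the same profile on both axes.\<close>

section \<open>Gaussian moments\<close>

definition gauss_moment :: "nat \<Rightarrow> real" where
  "gauss_moment n = (LINT x|lborel. exp (- (x^2)) * x^n)"

lemma has_bochner_integral_gauss_moment_even:
  "has_bochner_integral lborel (\<lambda>x::real. exp (- (x^2)) * x^(2*k))
     (sqrt pi * (fact (2*k) / (2^(2*k) * fact k)))"
  using has_bochner_integral_even_function[OF gaussian_moment_even_pos[where k=k]] by simp

lemma has_bochner_integral_gauss_moment_odd:
  "has_bochner_integral lborel (\<lambda>x::real. exp (- (x^2)) * x^(2*k+1)) 0"
  using gaussian_moment_odd_pos by (rule has_bochner_integral_odd_function) simp

lemma integrable_gauss_moment: "integrable lborel (\<lambda>x::real. exp (- (x^2)) * x^n)"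
proof (cases "even n")
  case True
  then obtain k where "n = 2*k" by auto
  then show ?thesis using has_bochner_integral_gauss_moment_even has_bochner_integral_iff by blast
next
  case False
  then obtain k where "n = 2*k+1" using oddE by blast
  then show ?thesis using has_bochner_integral_gauss_moment_odd has_bochner_integral_iff by blast
qed

lemma gauss_moment_even: "gauss_moment (2*k) = sqrt pi * (fact (2*k) / (2^(2*k) * fact k))"
  unfolding gauss_moment_def by (rule has_bochner_integral_integral_eq[OF has_bochner_integral_gauss_moment_even])

lemma gauss_moment_odd: "odd n \<Longrightarrow> gauss_moment n = 0"
  using has_bochner_integral_integral_eq[OF has_bochner_integral_gauss_moment_odd]
  by (auto simp: gauss_moment_def elim!: oddE)

lemma gauss_moment_add_2: "gauss_moment (n+2) = (real n + 1) / 2 * gauss_moment n"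
proof (cases "even n")
  case True
  then obtain k where k: "n = 2*k" by auto
  have fact_2k: "fact (2*k+2) = (2*real k+2) * (2*real k+1) * (fact (2*k)::real)"
    using fact_Suc[of "Suc (2*k)"] fact_Suc[of "2*k"] by (simp add: algebra_simps)
  have fact_k: "fact (k+1) = (real k+1) * (fact k::real)" by (simp add: algebra_simps)
  have pow: "(2::real)^(2*k+2) = 4 * 2^(2*k)" by (simp add: power_add)
  have "gauss_moment (n+2) = sqrt pi * (fact (2*k+2) / (2^(2*k+2) * fact (k+1)))"
    using gauss_moment_even[of "k+1"] k by (simp add: algebra_simps)
  also have "\<dots> = sqrt pi * ((2*real k+2) * (2*real k+1) / (4*(real k+1))
                    * (fact (2*k) / (2^(2*k) * fact k)))"
    unfolding fact_2k fact_k pow by (simp add: mult_ac)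
  also have "(2*real k+2) * (2*real k+1) / (4*(real k+1)) = (2*real k+1) / 2"
    by (simp add: field_simps)
  finally show ?thesis
    unfolding k gauss_moment_even by (simp add: mult_ac)
next
  case False
  then show ?thesis by (simp add: gauss_moment_odd)
qed

lemma gauss_moment_even_add:
  "gauss_moment (2*(k+t)) = gauss_moment (2*k) * pochhammer (real k + 1/2) t"
proof (induction t)
  case 0
  then show ?case by simp
next
  case (Suc t)
  have "gauss_moment (2*(k + Suc t)) = (real (2*(k+t)) + 1) / 2 * gauss_moment (2*(k+t))"
    using gauss_moment_add_2[of "2*(k+t)"] by simp
  then show ?case
    unfolding Suc pochhammer_Suc by (simp add: field_simps)
qed

section \<open>The Gaussian integral of a polynomial\<close>

definition gauss_integral :: "real poly \<Rightarrow> real" where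
  "gauss_integral p = (LINT x|lborel. poly p x * exp (- (x^2)))"

lemma poly_altdef_le: "degree (p::real poly) \<le> N \<Longrightarrow> poly p x = (\<Sum>i\<le>N. coeff p i * x^i)"
  unfolding poly_altdef by (rule sum.mono_neutral_left) (auto simp: coeff_eq_0)

lemma poly_gauss_eq_sum_moments:
  "degree (p::real poly) \<le> N
     \<Longrightarrow> poly p x * exp (- (x^2)) = (\<Sum>i\<le>N. coeff p i * (exp (- (x^2)) * x^i))"
  by (simp add: poly_altdef_le sum_distrib_left sum_distrib_right mult_ac)

lemma integrable_poly_gauss: "integrable lborel (\<lambda>x. poly (p::real poly) x * exp (- (x^2)))"
proof -
  have "integrable lborel (\<lambda>x. \<Sum>i\<le>degree p. coeff p i * (exp (- (x^2)) * x^i))"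
    by (auto intro!: Bochner_Integration.integrable_sum integrable_mult_right integrable_gauss_moment)
  then show ?thesis
    by (subst poly_gauss_eq_sum_moments[OF order.refl])
qed

lemma gauss_integral_eq_moments:
  assumes "degree p \<le> N"
  shows "gauss_integral p = (\<Sum>i\<le>N. coeff p i * gauss_moment i)"
  unfolding gauss_integral_def gauss_moment_def poly_gauss_eq_sum_moments[OF assms]
  using integrable_gauss_moment by (subst Bochner_Integration.integral_sum) auto

lemma gauss_integral_0 [simp]: "gauss_integral 0 = 0"
  by (simp add: gauss_integral_def)

lemma gauss_integral_add: "gauss_integral (p + q) = gauss_integral p + gauss_integral q"
  unfolding gauss_integral_def distrib_right poly_add
  by (rule Bochner_Integration.integral_add[OF integrable_poly_gauss integrable_poly_gauss])

lemma gauss_integral_diff: "gauss_integral (p - q) = gauss_integral p - gauss_integral q"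
  unfolding gauss_integral_def left_diff_distrib poly_diff
  by (rule Bochner_Integration.integral_diff[OF integrable_poly_gauss integrable_poly_gauss])

lemma gauss_integral_minus: "gauss_integral (- p) = - gauss_integral p"
  using gauss_integral_diff[of 0 p] by simp

lemma gauss_integral_smult: "gauss_integral (smult c p) = c * gauss_integral p"
  unfolding gauss_integral_def by (simp add: mult.assoc)

lemma gauss_integral_sum: "gauss_integral (\<Sum>i\<in>A. p i) = (\<Sum>i\<in>A. gauss_integral (p i))"
  by (induction A rule: infinite_finite_induct) (simp_all add: gauss_integral_add)

text \<open>Integration by parts against \<open>e^(-x^2)\<close>, read off the moment recursion.\<close>
lemma gauss_integral_pderiv: "gauss_integral (pderiv p) = 2 * gauss_integral (pCons 0 p)"
proof -
  let ?N = "degree p" and ?c = "coeff p" and ?M = gauss_moment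
  have "gauss_integral (pderiv p) = (\<Sum>i\<le>?N. of_nat (Suc i) * ?c (Suc i) * ?M i)"
    by (simp add: gauss_integral_eq_moments[of _ ?N] degree_pderiv coeff_pderiv)
  also have "\<dots> = 2 * (\<Sum>i\<le>?N. ?c (Suc i) * ?M (Suc (Suc i)))"
  proof -
    have summand: "of_nat (Suc i) * ?c (Suc i) * ?M i = 2 * (?c (Suc i) * ?M (Suc (Suc i)))" for i
    proof -
      have "?M (Suc (Suc i)) = (real i + 1) / 2 * ?M i"
        using gauss_moment_add_2[of i] by simp
      then show ?thesis by (simp only:) (simp add: field_simps)
    qed
    show ?thesis
      unfolding sum_distrib_left by (rule sum.cong[OF refl], rule summand)
  qed
  also have "(\<Sum>i\<le>?N. ?c (Suc i) * ?M (Suc (Suc i))) = (\<Sum>i\<le>Suc ?N. ?c i * ?M (Suc i))"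
    by (subst sum.atMost_Suc_shift) (simp add: gauss_moment_odd)
  also have "\<dots> = (\<Sum>i\<le>?N. ?c i * ?M (Suc i))"
    by (simp add: coeff_eq_0)
  also have "\<dots> = gauss_integral (pCons 0 p)"
    by (simp only: gauss_integral_eq_moments[OF degree_pCons_le] sum.atMost_Suc_shift
        coeff_pCons_0 coeff_pCons_Suc)
  finally show ?thesis .
qed

section \<open>Hermite polynomials\<close>

fun hermite_poly :: "nat \<Rightarrow> real poly" where
  "hermite_poly 0 = 1"
| "hermite_poly (Suc 0) = [:0, 2:]"
| "hermite_poly (Suc (Suc n)) =
     smult 2 (pCons 0 (hermite_poly (Suc n))) - smult (2 * real (Suc n)) (hermite_poly n)"

lemma poly_hermite_poly [simp]: "poly (hermite_poly n) x = hermite n x"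
  by (induction n rule: hermite_poly.induct) (simp_all add: algebra_simps)

lemma pderiv_hermite_poly:
  "pderiv (hermite_poly (Suc n)) = smult (2 * real (Suc n)) (hermite_poly n)"
proof (induction n rule: hermite_poly.induct)
  case (3 n)
  have "pderiv (hermite_poly (Suc (Suc (Suc n)))) =
     smult 2 (hermite_poly (Suc (Suc n))) + smult 2 (pCons 0 (pderiv (hermite_poly (Suc (Suc n)))))
     - smult (2 * real (Suc (Suc n))) (pderiv (hermite_poly (Suc n)))"
    by (simp only: hermite_poly.simps pderiv_diff pderiv_smult pderiv_pCons) (simp add: smult_add_right)
  then show ?case
    unfolding 3 by (simp add: poly_eq_poly_eq_iff[symmetric] fun_eq_iff algebra_simps)
qed (simp_all add: pderiv_pCons pderiv_diff pderiv_smult)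

lemma hermite_poly_Suc:
  "hermite_poly (Suc n) = smult 2 (pCons 0 (hermite_poly n)) - pderiv (hermite_poly n)"
  by (cases n) (simp_all add: pderiv_pCons pderiv_hermite_poly)

lemma degree_coeff_hermite_poly: "degree (hermite_poly n) \<le> n \<and> coeff (hermite_poly n) n = 2^n"
proof (induction n rule: hermite_poly.induct)
  case (3 n)
  have "degree (smult 2 (pCons 0 (hermite_poly (Suc n)))) \<le> Suc (Suc n)"
    using 3 by (metis Suc_le_mono degree_pCons_le degree_smult_le order.trans)
  moreover have "degree (smult (2 * real (Suc n)) (hermite_poly n)) \<le> Suc (Suc n)"
    using 3 by (meson degree_smult_le le_SucI order.trans)
  ultimately have "degree (hermite_poly (Suc (Suc n))) \<le> Suc (Suc n)"
    by (simp only: hermite_poly.simps degree_diff_le)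
  moreover have "coeff (hermite_poly n) (Suc (Suc n)) = 0"
    using 3 by (intro coeff_eq_0) simp
  ultimately show ?case
    using 3 by simp
qed simp_all

lemma degree_hermite_poly: "degree (hermite_poly n) = n"
  using degree_coeff_hermite_poly[of n] by (simp add: le_antisym le_degree)

lemma gauss_integral_hermite_poly_mult:
  "gauss_integral (hermite_poly n * q) = gauss_integral ((pderiv ^^ n) q)"
proof (induction n arbitrary: q)
  case (Suc n)
  let ?H = "hermite_poly n"
  have deriv: "pderiv (?H * q) = ?H * pderiv q + pderiv ?H * q"
    by (simp add: pderiv_mult algebra_simps)
  have rec: "hermite_poly (Suc n) * q = smult 2 (pCons 0 (?H * q)) - pderiv ?H * q"
    by (simp add: hermite_poly_Suc algebra_simps mult_pCons_left)
  have "gauss_integral (hermite_poly (Suc n) * q) = gauss_integral (?H * pderiv q)"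
    using gauss_integral_pderiv[of "?H * q"]
    unfolding deriv rec gauss_integral_add gauss_integral_diff gauss_integral_smult by simp
  then show ?case
    by (simp add: Suc funpow_Suc_right del: funpow.simps)
qed simp

lemma higher_pderiv_eq_0:
  "degree (q::'a::{semidom,semiring_char_0} poly) < n \<Longrightarrow> (pderiv ^^ n) q = 0"
  by (intro poly_eqI) (simp add: coeff_higher_pderiv coeff_eq_0)

lemma gauss_integral_hermite_poly_orthogonal:
  "degree q < n \<Longrightarrow> gauss_integral (hermite_poly n * q) = 0"
  by (simp add: gauss_integral_hermite_poly_mult higher_pderiv_eq_0)

section \<open>Laguerre polynomials\<close>

lemma alternating_binomial_sum_Suc:
  fixes f :: "nat \<Rightarrow> real"
  shows "(\<Sum>k\<le>Suc N. (-1)^k * real (Suc N choose k) * f k)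
       = (\<Sum>k\<le>N. (-1)^k * real (N choose k) * (f k - f (Suc k)))"
proof -
  have lhs: "(\<Sum>k\<le>Suc N. (-1)^k * real (Suc N choose k) * f k)
     = f 0 - (\<Sum>k\<le>N. (-1)^k * real (N choose k) * f (Suc k))
           - (\<Sum>k\<le>N. (-1)^k * real (N choose Suc k) * f (Suc k))"
  proof -
    have "(\<Sum>k\<le>Suc N. (-1)^k * real (Suc N choose k) * f k)
       = f 0 + (\<Sum>k\<le>N. (-1)^(Suc k) * real (Suc N choose Suc k) * f (Suc k))"
      by (simp only: sum.atMost_Suc_shift) simp
    also have "(\<Sum>k\<le>N. (-1)^(Suc k) * real (Suc N choose Suc k) * f (Suc k))
       = (\<Sum>k\<le>N. - ((-1)^k * real (N choose k) * f (Suc k)) - (-1)^k * real (N choose Suc k) * f (Suc k))"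
      by (rule sum.cong) (simp_all add: algebra_simps)
    also have "\<dots> = - (\<Sum>k\<le>N. (-1)^k * real (N choose k) * f (Suc k)) - (\<Sum>k\<le>N. (-1)^k * real (N choose Suc k) * f (Suc k))"
      by (simp add: sum_subtractf sum_negf)
    finally show ?thesis by simp
  qed
  have rhs: "(\<Sum>k\<le>N. (-1)^k * real (N choose k) * f k)
     = f 0 - (\<Sum>k\<le>N. (-1)^k * real (N choose Suc k) * f (Suc k))"
  proof -
    have "(\<Sum>k\<le>N. (-1)^k * real (N choose k) * f k) = (\<Sum>k\<le>Suc N. (-1)^k * real (N choose k) * f k)"
      by simp
    also have "\<dots> = f 0 - (\<Sum>k\<le>N. (-1)^k * real (N choose Suc k) * f (Suc k))"
      by (simp only: sum.atMost_Suc_shift) (simp add: sum_negf)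
    finally show ?thesis .
  qed
  show ?thesis using lhs rhs by (simp add: algebra_simps sum_subtractf)
qed

lemma alternating_binomial_sum_pochhammer:
  "s < N \<Longrightarrow> (\<Sum>k\<le>N. (-1)^k * real (N choose k) * pochhammer (real k + c) s) = 0"
proof (induction N arbitrary: c s)
  case (Suc N)
  show ?case
  proof (cases s)
    case 0
    then show ?thesis by (simp only: alternating_binomial_sum_Suc) simp
  next
    case (Suc s')
    have difference: "pochhammer (real k + c) (Suc s') - pochhammer (real (Suc k) + c) (Suc s')
        = - real (Suc s') * pochhammer (real k + (c + 1)) s'" for k
    proof -
      have "pochhammer (real k + c) (Suc s') = (real k + c) * pochhammer (real k + c + 1) s'"
        by (rule pochhammer_rec)
      moreover have "pochhammer (real (Suc k) + c) (Suc s')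
          = pochhammer (real k + c + 1) s' * (real k + c + 1 + real s')"
        by (simp add: pochhammer_Suc add_ac)
      ultimately show ?thesis by (simp add: algebra_simps)
    qed
    have "s' < N" using Suc.prems Suc by simp
    have "(\<Sum>k\<le>Suc N. (-1)^k * real (Suc N choose k) * pochhammer (real k + c) s)
        = (\<Sum>k\<le>N. (-1)^k * real (N choose k) * (- real (Suc s') * pochhammer (real k + (c + 1)) s'))"
      unfolding alternating_binomial_sum_Suc Suc difference by simp
    also have "\<dots> = - real (Suc s') * (\<Sum>k\<le>N. (-1)^k * real (N choose k) * pochhammer (real k + (c + 1)) s')"
      by (simp add: sum_distrib_left mult_ac)
    also have "\<dots> = 0" using Suc.IH[OF \<open>s' < N\<close>] by simp
    finally show ?thesis .
  qed
qed simp

definition laguerre_coeff :: "nat \<Rightarrow> real \<Rightarrow> nat \<Rightarrow> real" where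
  "laguerre_coeff N a k = (-1)^k * ((real N + a) gchoose (N - k)) / fact k"

definition laguerre_sq_poly :: "nat \<Rightarrow> real \<Rightarrow> nat \<Rightarrow> real poly" where
  "laguerre_sq_poly e a N = (\<Sum>k\<le>N. monom (laguerre_coeff N a k) (2*k + e))"

lemma poly_laguerre_sq_poly: "poly (laguerre_sq_poly e a N) x = x^e * laguerre N a (x^2)"
  unfolding laguerre_sq_poly_def laguerre_def laguerre_coeff_def poly_sum poly_monom
  by (simp add: sum_distrib_left power_add mult_ac flip: power_mult)

lemma degree_laguerre_sq_poly: "degree (laguerre_sq_poly e a N) = 2*N + e"
proof (rule antisym)
  show "degree (laguerre_sq_poly e a N) \<le> 2*N + e"
    unfolding laguerre_sq_poly_def
    by (rule degree_sum_le) (auto intro: order.trans[OF degree_monom_le])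
  have "coeff (laguerre_sq_poly e a N) (2*N + e) = laguerre_coeff N a N"
    unfolding laguerre_sq_poly_def coeff_sum coeff_monom by (simp add: sum.delta)
  then show "2*N + e \<le> degree (laguerre_sq_poly e a N)"
    by (intro le_degree) (simp add: laguerre_coeff_def)
qed

lemma gauss_integral_laguerre_sq_poly_monom:
  "gauss_integral (laguerre_sq_poly e a N * monom 1 i)
     = (\<Sum>k\<le>N. laguerre_coeff N a k * gauss_moment (2*k + e + i))"
proof -
  have "gauss_integral (monom c n) = c * gauss_moment n" for c n
    by (simp add: gauss_integral_def gauss_moment_def poly_monom mult_ac)
  then show ?thesis
    unfolding laguerre_sq_poly_def sum_distrib_right mult_monom gauss_integral_sum by simp
qed

text \<open>The orthogonality relation of \<open>L_N^(b-1/2)\<close> against \<open>t^s\<close>, in the variable \<open>t = x^2\<close>.\<close>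
lemma laguerre_gauss_moment_sum_eq_0:
  assumes "s < N"
  shows "(\<Sum>k\<le>N. laguerre_coeff N (real b - 1/2) k * gauss_moment (2*(k+b+s))) = 0"
proof -
  let ?M = gauss_moment and ?p = "\<lambda>k. pochhammer (real k + (real b + 1/2)) s"
  have summand: "laguerre_coeff N (real b - 1/2) k * ?M (2*(k+b+s))
      = ?M (2*(N+b)) / fact N * ((-1)^k * real (N choose k) * ?p k)" if k: "k \<le> N" for k
  proof -
    have binom: "(real N + (real b - 1/2)) gchoose (N-k) = pochhammer (real (k+b) + 1/2) (N-k) / fact (N-k)"
      unfolding gbinomial_pochhammer' using k by (simp add: of_nat_diff algebra_simps)
    have moment_s: "?M (2*(k+b+s)) = ?M (2*(k+b)) * pochhammer (real (k+b) + 1/2) s"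
      by (rule gauss_moment_even_add)
    have moment_N: "?M (2*(k+b)) * pochhammer (real (k+b) + 1/2) (N-k) = ?M (2*(N+b))"
    proof -
      have "2*(k+b+(N-k)) = 2*(N+b)" using k by simp
      then show ?thesis using gauss_moment_even_add[of "k+b" "N-k"] by (simp only:)
    qed
    have choose: "real (N choose k) = fact N / (fact k * fact (N-k))"
      using binomial_fact[OF k] by simp
    have "laguerre_coeff N (real b - 1/2) k * ?M (2*(k+b+s))
       = (-1)^k / (fact k * fact (N-k)) * (?M (2*(k+b)) * pochhammer (real (k+b) + 1/2) (N-k))
           * pochhammer (real (k+b) + 1/2) s"
      unfolding laguerre_coeff_def binom moment_s by (simp add: field_simps)
    also have "\<dots> = (-1)^k / (fact k * fact (N-k)) * ?M (2*(N+b)) * ?p k"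
      unfolding moment_N by (simp add: add_ac)
    also have "\<dots> = ?M (2*(N+b)) / fact N * ((-1)^k * real (N choose k) * ?p k)"
      unfolding choose by (simp add: field_simps)
    finally show ?thesis .
  qed
  have "(\<Sum>k\<le>N. laguerre_coeff N (real b - 1/2) k * ?M (2*(k+b+s)))
      = ?M (2*(N+b)) / fact N * (\<Sum>k\<le>N. (-1)^k * real (N choose k) * ?p k)"
    unfolding sum_distrib_left by (rule sum.cong[OF refl], rule summand) simp
  also have "\<dots> = 0"
    using alternating_binomial_sum_pochhammer[OF assms] by simp
  finally show ?thesis .
qed

lemma gauss_integral_laguerre_sq_poly_orthogonal:
  assumes "e + i = 2*(b+s)" "s < N"
  shows "gauss_integral (laguerre_sq_poly e (real b - 1/2) N * monom 1 i) = 0"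
proof -
  have index: "2*k + e + i = 2*(k+b+s)" for k
    using assms(1) by simp
  show ?thesis
    unfolding gauss_integral_laguerre_sq_poly_monom index
    by (rule laguerre_gauss_moment_sum_eq_0[OF assms(2)])
qed

lemma gauss_integral_laguerre_sq_poly_odd:
  "odd (e + i) \<Longrightarrow> gauss_integral (laguerre_sq_poly e a N * monom 1 i) = 0"
  by (simp add: gauss_integral_laguerre_sq_poly_monom gauss_moment_odd add.assoc)

lemma Y2_eq_laguerre_sq_poly:
  assumes "0 < m"
  obtains N e a where "m = 2*N + e" "0 < e"
    and "\<And>x y. Y2 m x y = poly (laguerre_sq_poly e a N) x - poly (laguerre_sq_poly e a N) y"
    and "\<And>i. 0 < i \<Longrightarrow> i < m \<Longrightarrow> gauss_integral (laguerre_sq_poly e a N * monom 1 i) = 0"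
proof (cases "even m")
  case True
  define N where "N = m div 2 - 1"
  have N: "m = 2*N + 2"
    using True assms unfolding N_def by auto
  show ?thesis
  proof (rule that[of N 2 "real 2 - 1/2"])
    fix x y
    show "Y2 m x y = poly (laguerre_sq_poly 2 (real 2 - 1/2) N) x - poly (laguerre_sq_poly 2 (real 2 - 1/2) N) y"
      using True by (simp add: Y2_def poly_laguerre_sq_poly N)
  next
    fix i assume i: "0 < i" "i < m"
    show "gauss_integral (laguerre_sq_poly 2 (real 2 - 1/2) N * monom 1 i) = 0"
    proof (cases "even i")
      case True
      define j where "j = i div 2 - 1"
      have "i = 2*(j+1)"
        using True i(1) unfolding j_def by auto
      then show ?thesis
        using i(2) N by (intro gauss_integral_laguerre_sq_poly_orthogonal[where s=j]) simp_all
    qed (simp add: gauss_integral_laguerre_sq_poly_odd)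
  qed (simp_all add: N)
next
  case False
  then obtain N where N: "m = 2*N + 1" using oddE by blast
  show ?thesis
  proof (rule that[of N 1 "real 1 - 1/2"])
    fix x y
    show "Y2 m x y = poly (laguerre_sq_poly 1 (real 1 - 1/2) N) x - poly (laguerre_sq_poly 1 (real 1 - 1/2) N) y"
      using False by (simp add: Y2_def poly_laguerre_sq_poly N)
  next
    fix i assume i: "0 < i" "i < m"
    show "gauss_integral (laguerre_sq_poly 1 (real 1 - 1/2) N * monom 1 i) = 0"
    proof (cases "even i")
      case False
      then obtain j where "i = 2*j + 1" using oddE by blast
      then show ?thesis
        using i(2) N by (intro gauss_integral_laguerre_sq_poly_orthogonal[where s=j]) simp_all
    qed (simp add: gauss_integral_laguerre_sq_poly_odd)
  qed (simp_all add: N)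
qed

section \<open>Polynomials on the two coordinate axes\<close>

lemma triangle_eq_Sigma: "{(i,j). i+j \<le> (m::nat)} = Sigma {..m} (\<lambda>i. {..m-i})"
  by auto

lemma lower_triangle_eq_Sigma: "{(i,j). i+j < (m::nat)} = Sigma {..<m} (\<lambda>i. {..<m-i})"
  by (rule set_eqI) auto

lemma sum_triangle_axes:
  fixes a b :: "nat \<Rightarrow> real"
  shows "(\<Sum>(i,j)\<in>{(i,j). i+j \<le> m}. ((if j=0 then a i else 0) + (if i=0 then b j else 0)) * x^i * y^j)
     = (\<Sum>i\<le>m. a i * x^i) + (\<Sum>j\<le>m. b j * y^j)"
proof -
  have "(\<Sum>(i,j)\<in>{(i,j). i+j \<le> m}. ((if j=0 then a i else 0) + (if i=0 then b j else 0)) * x^i * y^j)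
     = (\<Sum>i\<le>m. \<Sum>j\<le>m-i. ((if j=0 then a i else 0) + (if i=0 then b j else 0)) * x^i * y^j)"
    unfolding triangle_eq_Sigma by (subst sum.Sigma) auto
  also have "\<dots> = (\<Sum>i\<le>m. a i * x^i + (if i = 0 then (\<Sum>j\<le>m. b j * y^j) else 0))"
  proof (rule sum.cong)
    fix i assume "i \<in> {..m}"
    have "(\<Sum>j\<le>m-i. ((if j=0 then a i else 0) + (if i=0 then b j else 0)) * x^i * y^j)
       = (\<Sum>j\<le>m-i. (if j=0 then a i * x^i else 0)) + (\<Sum>j\<le>m-i. (if i=0 then b j * y^j else 0))"
      by (subst sum.distrib[symmetric]) (rule sum.cong, auto)
    also have "\<dots> = a i * x^i + (if i = 0 then (\<Sum>j\<le>m. b j * y^j) else 0)"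
      by (simp add: sum.delta)
    finally show "(\<Sum>j\<le>m-i. ((if j=0 then a i else 0) + (if i=0 then b j else 0)) * x^i * y^j)
       = a i * x^i + (if i = 0 then (\<Sum>j\<le>m. b j * y^j) else 0)" .
  qed simp
  also have "\<dots> = (\<Sum>i\<le>m. a i * x^i) + (\<Sum>j\<le>m. b j * y^j)"
    by (simp add: sum.distrib sum.delta)
  finally show ?thesis .
qed

lemma bipoly_of_degree_poly_add:
  assumes f: "\<And>x y. f x y = poly P x + poly Q y"
    and "degree P = m" "degree Q \<le> m" "0 < m"
  shows "bipoly_of_degree m f"
  unfolding bipoly_of_degree_def
proof (intro exI[of _ "\<lambda>i j. (if j=0 then coeff P i else 0) + (if i=0 then coeff Q j else 0)"] conjI allI)
  fix x y
  show "f x y = (\<Sum>(i,j)\<in>{(i,j). i+j \<le> m}.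
      ((if j=0 then coeff P i else 0) + (if i=0 then coeff Q j else 0)) * x^i * y^j)"
    unfolding sum_triangle_axes f using assms(2,3) by (simp add: poly_altdef_le)
next
  have "coeff P m \<noteq> 0"
    using assms(2,4) leading_coeff_neq_0[of P] by auto
  then show "\<exists>i j. i + j = m \<and> (if j=0 then coeff P i else 0) + (if i=0 then coeff Q j else 0) \<noteq> 0"
    using assms(2,4) by (intro exI[of _ m] exI[of _ 0]) simp
qed

lemma sum_lower_triangle_x_axis:
  fixes c :: "nat \<Rightarrow> nat \<Rightarrow> 'a::comm_semiring_1"
  shows "(\<Sum>(i,j)\<in>{(i,j). i+j < m}. c i j * x^i * 0^j) = (\<Sum>i<m. c i 0 * x^i)"
  unfolding lower_triangle_eq_Sigma
  by (subst sum.Sigma[symmetric])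
    (auto simp: power_0_left if_distrib sum.delta cong: if_cong intro!: sum.cong)

lemma sum_lower_triangle_y_axis:
  fixes c :: "nat \<Rightarrow> nat \<Rightarrow> 'a::comm_semiring_1"
  shows "(\<Sum>(i,j)\<in>{(i,j). i+j < m}. c i j * 0^i * y^j) = (\<Sum>j<m. c 0 j * y^j)"
proof -
  have "(\<Sum>(i,j)\<in>{(i,j). i+j < m}. c i j * 0^i * y^j) = (\<Sum>i<m. \<Sum>j<m-i. c i j * 0^i * y^j)"
    unfolding lower_triangle_eq_Sigma by (subst sum.Sigma) auto
  also have "\<dots> = (\<Sum>i<m. if i = 0 then (\<Sum>j<m. c 0 j * y^j) else 0)"
    by (rule sum.cong[OF refl]) (simp add: power_0_left)
  finally show ?thesis by (cases m) (simp_all add: sum.delta)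
qed

lemma axes_ip_poly:
  assumes "\<And>x. F x 0 = poly P x" "\<And>y. F 0 y = poly Q y"
    and "\<And>x. G x 0 = poly R x" "\<And>y. G 0 y = poly S y"
  shows "axes_ip F G = gauss_integral (P * R) + gauss_integral (Q * S)"
  unfolding axes_ip_def gauss_integral_def by (simp add: assms)

lemma gauss_integral_mult_sum_monom:
  "gauss_integral (P * (\<Sum>i<m. monom (d i) i)) = (\<Sum>i<m. d i * gauss_integral (P * monom 1 i))"
proof -
  have "monom (d i) i = smult (d i) (monom 1 i)" for i
    by (simp add: smult_monom)
  then show ?thesis
    by (simp add: sum_distrib_left gauss_integral_sum gauss_integral_smult)
qed

lemma axes_ip_lower_degree_eq_0:
  fixes c :: "nat \<Rightarrow> nat \<Rightarrow> real"
  assumes F: "\<And>x. F x 0 = poly P x" "\<And>y. F 0 y = poly Q y"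
    and P: "\<And>i. 0 < i \<Longrightarrow> i < m \<Longrightarrow> gauss_integral (P * monom 1 i) = 0"
    and Q: "\<And>i. 0 < i \<Longrightarrow> i < m \<Longrightarrow> gauss_integral (Q * monom 1 i) = 0"
    and const: "gauss_integral P + gauss_integral Q = 0"
  shows "axes_ip F (\<lambda>x y. \<Sum>(i,j)\<in>{(i,j). i + j < m}. c i j * x^i * y^j) = 0"
proof -
  have "axes_ip F (\<lambda>x y. \<Sum>(i,j)\<in>{(i,j). i + j < m}. c i j * x^i * y^j)
      = gauss_integral (P * (\<Sum>i<m. monom (c i 0) i)) + gauss_integral (Q * (\<Sum>j<m. monom (c 0 j) j))"
    by (rule axes_ip_poly)
      (simp_all add: F poly_sum poly_monom sum_lower_triangle_x_axis sum_lower_triangle_y_axis)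
  also have "\<dots> = (\<Sum>i<m. if i = 0 then c 0 0 * gauss_integral P else 0)
      + (\<Sum>i<m. if i = 0 then c 0 0 * gauss_integral Q else 0)"
    unfolding gauss_integral_mult_sum_monom
    by (intro arg_cong2[where f="(+)"] sum.cong) (auto simp: P Q)
  also have "\<dots> = 0"
    using const by (simp add: sum.delta' flip: distrib_left)
  finally show ?thesis .
qed

theorem proposition6p3:
  fixes m :: nat
  assumes "m \<ge> 1"
  shows "bipoly_of_degree m (Y1 m) \<and> bipoly_of_degree m (Y2 m)
    \<and> (\<forall>c :: nat \<Rightarrow> nat \<Rightarrow> real.
          axes_ip (Y1 m) (\<lambda>x y. \<Sum>(i,j)\<in>{(i,j). i + j < m}. c i j * x^i * y^j) = 0
        \<and> axes_ip (Y2 m) (\<lambda>x y. \<Sum>(i,j)\<in>{(i,j). i + j < m}. c i j * x^i * y^j) = 0)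
    \<and> axes_ip (Y1 m) (Y2 m) = 0"
proof -
  have m: "0 < m" using assms by simp
  obtain N e a where deg: "m = 2*N + e" "0 < e"
    and Y2: "\<And>x y. Y2 m x y = poly (laguerre_sq_poly e a N) x - poly (laguerre_sq_poly e a N) y"
    and L_orth: "\<And>i. 0 < i \<Longrightarrow> i < m \<Longrightarrow> gauss_integral (laguerre_sq_poly e a N * monom 1 i) = 0"
    using Y2_eq_laguerre_sq_poly[OF m] by metis
  define L where "L = laguerre_sq_poly e a N"
  define H where "H = hermite_poly m"
  note Y2 = Y2[folded L_def] and L_orth = L_orth[folded L_def]
  have L_0: "poly L 0 = 0"
    using deg(2) by (simp add: L_def poly_laguerre_sq_poly)
  have Y1_x: "Y1 m x 0 = poly H x" and Y1_y: "Y1 m 0 y = poly H y" for x y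
    by (simp_all add: Y1_def H_def)
  have Y2_x: "Y2 m x 0 = poly L x" and Y2_y: "Y2 m 0 y = poly (- L) y" for x y
    by (simp_all add: Y2 L_0)
  have H_orth: "gauss_integral (H * monom 1 i) = 0" if "i < m" for i
    using that by (simp add: H_def gauss_integral_hermite_poly_orthogonal degree_monom_eq)
  have "bipoly_of_degree m (Y1 m)"
    by (rule bipoly_of_degree_poly_add[of _ H "H - [:hermite m 0:]"])
      (simp_all add: Y1_def H_def degree_hermite_poly degree_diff_le m)
  moreover have "bipoly_of_degree m (Y2 m)"
  proof (rule bipoly_of_degree_poly_add[of _ L "- L"])
    show "degree L = m"
      using deg(1) by (simp add: L_def degree_laguerre_sq_poly)
    then show "degree (- L) \<le> m" by simp
  qed (simp_all add: Y2 m)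
  moreover have "axes_ip (Y1 m) (\<lambda>x y. \<Sum>(i,j)\<in>{(i,j). i + j < m}. c i j * x^i * y^j) = 0" for c
    using H_orth[of 0] m by (intro axes_ip_lower_degree_eq_0[OF Y1_x Y1_y]) (simp_all add: H_orth)
  moreover have "axes_ip (Y2 m) (\<lambda>x y. \<Sum>(i,j)\<in>{(i,j). i + j < m}. c i j * x^i * y^j) = 0" for c
    by (rule axes_ip_lower_degree_eq_0[OF Y2_x Y2_y]) (simp_all add: L_orth gauss_integral_minus)
  moreover have "axes_ip (Y1 m) (Y2 m) = 0"
    by (simp add: axes_ip_poly[OF Y1_x Y1_y Y2_x Y2_y] gauss_integral_minus)
  ultimately show ?thesis by blast
qed

end
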